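(* Let $p,d\in C^{2}([0,\infty),\mathbb{R})$, $b\in C^2([0,\infty),\mathbb{C})$, $c\in C^1([0,\infty),\mathbb{C})$, $q\in C([0,\infty),\mathbb{R})$ with $p>0$ on $[0,\infty)$, and assume: (B1) the (possibly improper) limit $d_\infty:=\lim_{t\to\infty}d(t)\in\mathbb{R}\cup\{\pm\infty\}$ exists; (B2) there are constants $\beta,\gamma>0$ with $|b(t)|\le\beta(|d(t)|+1)$ and $|c(t)|\le\gamma(|d(t)|+1)$ for all $t\ge0$; (B3a) for some $\lambda\in\mathbb{R}\setminus\{d_\infty\}$ there is $t_\lambda\ge0$ with $\lambda\notin d([t_\lambda,\infty))$ and $\pi(\cdot,\lambda)$ bounded on $[t_\lambda,\infty)$; (B3b) for every $\lambda\in\mathbb{R}\setminus(\overline{\Delta([0,\infty))}\cup\{d_\infty\})$ there is $t_\lambda\ge0$ with $\lambda\notin d([t_\lambda,\infty))$ and $\rho(\cdot,\lambda)$, $\kappa(\cdot,\lambda)$, $1/\pi(\cdot,\lambda)$ bounded on $[t_\lambda,\infty)$; (C) for every $\lambda\in\mathbb{R}\setminus(\overline{\Delta([0,\infty))}\cup\{d_\infty\})$ the limits $\lim_{t\to\infty}\frac{\rho(t,\lambda)}{\pi(t,\lambda)}$ and $\lim_{t\to\infty}\frac{\kappa(t,\lambda)}{\pi(t,\lambda)}$ exist and are finite. Then for every $\lambda\in\mathbb{R}\setminus(\overline{\Delta([0,\infty))}\cup\{d_\infty\})$ the limits below exist, are finite and satisfy $$\lim_{t\to\infty}\frac{\frac{\partial}{\partial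 t}\pi(t,\lambda)}{\pi(t,\lambda)}=0,\qquad \lim_{t\to\infty}\frac{\rho(t,\lambda)}{\pi(t,\lambda)}\in\mathbb{R},\qquad \lim_{t\to\infty}\frac{\kappa(t,\lambda)}{\pi(t,\lambda)}\in\mathbb{R}.$$
   Context: Notation: $\Delta(t):=d(t)-|b(t)|^2/p(t)$. For $t$ with $d(t)\ne\lambda$: $\pi(t,\lambda):=p(t)-\frac{|b(t)|^2}{d(t)-\lambda}$, $\rho(t,\lambda):=-\frac{2\operatorname{Im}(b(t)\overline{c(t)})}{d(t)-\lambda}+i\frac{\partial}{\partial t}\pi(t,\lambda)$, $\kappa(t,\lambda):=q(t)-\lambda-\frac{|c(t)|^2}{d(t)-\lambda}+\frac{\partial}{\partial t}\Big(\frac{\overline{b(t)}c(t)}{d(t)-\lambda}\Big)$. The overline on a set denotes closure in $\mathbb{R}$. *)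

theory Defs
  imports "HOL-Analysis.Analysis"
begin

text \<open>f is k times continuously differentiable on S (one-sided derivatives at
boundary points of S, via derivatives within S).\<close>
definition Ck_on :: "nat \<Rightarrow> real set \<Rightarrow> (real \<Rightarrow> 'a::real_normed_vector) \<Rightarrow> bool" where
  "Ck_on k S f \<longleftrightarrow> (\<exists>D :: nat \<Rightarrow> real \<Rightarrow> 'a. D 0 = f \<and>
      (\<forall>j<k. \<forall>t\<in>S. (D j has_vector_derivative D (Suc j) t) (at t within S)) \<and>
      (\<forall>j\<le>k. continuous_on S (D j)))"

definition Delta_f :: "(real \<Rightarrow> real) \<Rightarrow> (real \<Rightarrow> complex) \<Rightarrow> (real \<Rightarrow> real) \<Rightarrow> real \<Rightarrow> real" where
  "Delta_f p b d t = d t - (cmod (b t))\<^sup>2 / p t"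

definition pi_f :: "(real \<Rightarrow> real) \<Rightarrow> (real \<Rightarrow> complex) \<Rightarrow> (real \<Rightarrow> real) \<Rightarrow> real \<Rightarrow> real \<Rightarrow> real" where
  "pi_f p b d t l = p t - (cmod (b t))\<^sup>2 / (d t - l)"

definition rho_f :: "(real \<Rightarrow> real) \<Rightarrow> (real \<Rightarrow> complex) \<Rightarrow> (real \<Rightarrow> complex) \<Rightarrow> (real \<Rightarrow> real)
    \<Rightarrow> real \<Rightarrow> real \<Rightarrow> complex" where
  "rho_f p b c d t l = complex_of_real (- 2 * Im (b t * cnj (c t)) / (d t - l))
      + \<i> * complex_of_real (vector_derivative (\<lambda>s. pi_f p b d s l) (at t))"

definition kappa_f :: "(real \<Rightarrow> complex) \<Rightarrow> (real \<Rightarrow> complex) \<Rightarrow> (real \<Rightarrow> real) \<Rightarrow> (real \<Rightarrow> real)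
    \<Rightarrow> real \<Rightarrow> real \<Rightarrow> complex" where
  "kappa_f b c d q t l = complex_of_real (q t - l - (cmod (c t))\<^sup>2 / (d t - l))
      + vector_derivative (\<lambda>s. cnj (b s) * c s / complex_of_real (d s - l)) (at t)"

end

theory Submission
  imports Defs
begin

text \<open>
  Since \<open>\<pi>\<close> is real, only the imaginary parts of the two limits have to vanish, and
  \<open>Im (\<rho>/\<pi>) = \<pi>'/\<pi>\<close>, \<open>Im (\<kappa>/\<pi>) = (Im w)'/\<pi>\<close> with \<open>w = conj b c / (d - \<lambda>)\<close>, while
  \<open>Re \<rho> = 2 Im w\<close>. So both are quotients \<open>g'/\<pi>\<close> with \<open>g\<close> bounded on a half-line: \<open>g = Im w\<close>
  because \<open>\<rho>\<close> is bounded, and \<open>g = \<pi>\<close> because \<open>\<pi>' = Im \<rho>\<close> is bounded and a nonzero limit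
  of \<open>\<pi>'/\<pi>\<close> forces \<open>\<pi>\<close> itself to be bounded. Now if \<open>g'/\<pi> \<longrightarrow> a \<noteq> 0\<close> with \<open>1/\<pi>\<close> bounded,
  the continuous nonvanishing \<open>\<pi>\<close> has constant sign, so \<open>g'\<close> is eventually bounded away
  from \<open>0\<close> with a fixed sign and \<open>g\<close> is unbounded by the mean value theorem.
\<close>

lemma bounded_image_atLeast_mono:
  fixes T T' :: "'a::order"
  assumes "bounded (f ` {T..})" and "T \<le> T'"
  shows "bounded (f ` {T'..})"
  using assms by (meson atLeast_subset_iff bounded_subset image_mono)

lemma obtain_at_top_close_to_limit:
  fixes f :: "real \<Rightarrow> real"
  assumes "a \<noteq> 0" and "(f \<longlongrightarrow> a) at_top"
  obtains T1 where "T1 \<ge> T" and "\<forall>t\<ge>T1. \<bar>f t - a\<bar> < \<bar>a\<bar> / 2"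
proof -
  have "\<forall>\<^sub>F t in at_top. \<bar>f t - a\<bar> < \<bar>a\<bar> / 2"
    using tendstoD[OF assms(2), of "\<bar>a\<bar> / 2"] assms(1) by (simp add: dist_real_def)
  then show ?thesis
    using that unfolding eventually_at_top_linorder by (metis max.cobounded1 max.cobounded2 order_trans)
qed

lemma unbounded_of_derivative_ge:
  fixes f f' :: "real \<Rightarrow> real"
  assumes deriv: "\<forall>t\<ge>T. (f has_real_derivative f' t) (at t)"
    and ge: "\<forall>t\<ge>T. f' t \<ge> k" and "k > 0"
  shows "\<not> bounded (f ` {T..})"
proof
  assume "bounded (f ` {T..})"
  then obtain M where M: "\<forall>t\<ge>T. \<bar>f t\<bar> \<le> M"
    by (auto simp: bounded_iff)
  define x where "x = T + (2 * M + 1) / k"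
  have "M \<ge> 0" using M by force
  then have "T < x" using \<open>k > 0\<close> by (simp add: x_def)
  then obtain z where z: "T < z" "f x - f T = (x - T) * f' z"
    using MVT2[of T x f f'] deriv by auto
  have "(x - T) * k \<le> (x - T) * f' z"
    using ge z \<open>T < x\<close> by (intro mult_left_mono) auto
  moreover have "(x - T) * k = 2 * M + 1" using \<open>k > 0\<close> by (simp add: x_def)
  moreover have "\<bar>f x\<bar> \<le> M" "\<bar>f T\<bar> \<le> M" using M \<open>T < x\<close> by auto
  ultimately show False using z by linarith
qed

lemma continuous_on_nonzero_sgn_eq:
  fixes P :: "real \<Rightarrow> real"
  assumes "continuous_on {T..} P" and "\<forall>t\<ge>T. P t \<noteq> 0" and "t \<ge> T"
  shows "sgn (P t) = sgn (P T)"
proof (rule ccontr)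
  assume "sgn (P t) \<noteq> sgn (P T)"
  then have "min (P t) (P T) \<le> 0" "0 \<le> max (P t) (P T)"
    using assms(2,3) by (auto simp: sgn_if split: if_splits)
  moreover have "connected (P ` {T..})"
    using assms(1) by (rule connected_continuous_image) simp
  moreover have "min (P t) (P T) \<in> P ` {T..}" "max (P t) (P T) \<in> P ` {T..}"
    using \<open>t \<ge> T\<close> by (auto simp: min_def max_def)
  ultimately have "0 \<in> P ` {T..}"
    unfolding connected_iff_interval by blast
  then show False using assms(2) by auto
qed

lemma bounded_derivative_ratio_limit_eq_0:
  fixes g g' P :: "real \<Rightarrow> real"
  assumes deriv: "\<forall>t\<ge>T. (g has_real_derivative g' t) (at t)"
    and g_bounded: "bounded (g ` {T..})"
    and P_cont: "continuous_on {T..} P"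
    and inv_P_bounded: "bounded ((\<lambda>t. 1 / P t) ` {T..})"
    and lim: "((\<lambda>t. g' t / P t) \<longlongrightarrow> a) at_top"
  shows "a = 0"
proof (rule ccontr)
  assume "a \<noteq> 0"
  then obtain T1 where "T1 \<ge> T" and close: "\<forall>t\<ge>T1. \<bar>g' t / P t - a\<bar> < \<bar>a\<bar> / 2"
    using lim by (rule obtain_at_top_close_to_limit)
  have P_nonzero: "\<forall>t\<ge>T1. P t \<noteq> 0"
    using close \<open>a \<noteq> 0\<close> by force
  obtain B where B: "\<forall>t\<ge>T. \<bar>1 / P t\<bar> \<le> B"
    using inv_P_bounded by (auto simp: bounded_iff)
  have "0 < \<bar>1 / P T1\<bar>" using P_nonzero by simp
  then have "B > 0" using B \<open>T1 \<ge> T\<close> by (meson less_le_trans)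
  \<comment> \<open>\<open>g' = (g'/P) P\<close> has eventually the constant sign \<open>\<sigma>\<close>\<close>
  define \<sigma> where "\<sigma> = sgn a * sgn (P T1)"
  have "\<sigma> * g' t \<ge> \<bar>a\<bar> / 2 * (1 / B)" if "t \<ge> T1" for t
  proof -
    define r where "r = g' t / P t"
    have "\<bar>r - a\<bar> < \<bar>a\<bar> / 2" using close that by (simp add: r_def)
    then have "sgn r = sgn a" and r_large: "\<bar>a\<bar> / 2 \<le> \<bar>r\<bar>"
      by (auto simp: sgn_if abs_if split: if_splits)
    moreover have "sgn (P t) = sgn (P T1)"
      using continuous_on_nonzero_sgn_eq[of T1 P t] continuous_on_subset[OF P_cont] \<open>T1 \<ge> T\<close>
        P_nonzero that by auto
    ultimately have "\<sigma> * g' t = (sgn r * r) * (sgn (P t) * P t)"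
      using P_nonzero that by (simp add: \<sigma>_def r_def)
    also have "\<dots> = \<bar>r\<bar> * \<bar>P t\<bar>"
      by (simp add: abs_sgn mult.commute)
    moreover have P_large: "1 / B \<le> \<bar>P t\<bar>"
      using B[rule_format, of t] P_nonzero that \<open>T1 \<ge> T\<close> \<open>B > 0\<close> by (simp add: field_simps)
    ultimately show ?thesis
      using mult_mono[OF r_large P_large] \<open>B > 0\<close> by simp
  qed
  moreover have "\<forall>t\<ge>T1. ((\<lambda>t. \<sigma> * g t) has_real_derivative \<sigma> * g' t) (at t)"
    using deriv \<open>T1 \<ge> T\<close> by (auto intro: DERIV_cmult)
  ultimately have "\<not> bounded ((\<lambda>t. \<sigma> * g t) ` {T1..})"
    using \<open>B > 0\<close> \<open>a \<noteq> 0\<close> by (intro unbounded_of_derivative_ge[where k = "\<bar>a\<bar> / 2 * (1 / B)"]) auto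
  moreover have "bounded ((\<lambda>t. \<sigma> * g t) ` {T1..})"
    using bounded_scaling[OF bounded_image_atLeast_mono[OF g_bounded \<open>T1 \<ge> T\<close>], of \<sigma>]
    by (simp add: image_image)
  ultimately show False by contradiction
qed

lemma bounded_log_derivative_limit_eq_0:
  fixes P P' :: "real \<Rightarrow> real"
  assumes deriv: "\<forall>t\<ge>T. (P has_real_derivative P' t) (at t)"
    and P'_bounded: "bounded (P' ` {T..})"
    and inv_P_bounded: "bounded ((\<lambda>t. 1 / P t) ` {T..})"
    and lim: "((\<lambda>t. P' t / P t) \<longlongrightarrow> a) at_top"
  shows "a = 0"
proof (rule ccontr)
  assume "a \<noteq> 0"
  then obtain T1 where "T1 \<ge> T" and close: "\<forall>t\<ge>T1. \<bar>P' t / P t - a\<bar> < \<bar>a\<bar> / 2"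
    using lim by (rule obtain_at_top_close_to_limit)
  obtain M where M: "\<forall>t\<ge>T. \<bar>P' t\<bar> \<le> M"
    using P'_bounded by (auto simp: bounded_iff)
  have "\<bar>P t\<bar> \<le> 2 * M / \<bar>a\<bar>" if "t \<ge> T1" for t
  proof -
    have "\<bar>a\<bar> / 2 < \<bar>P' t / P t\<bar>" using close[rule_format, OF that] by arith
    then have "\<bar>a\<bar> / 2 * \<bar>P t\<bar> \<le> \<bar>P' t\<bar>"
      by (cases "P t = 0") (auto simp: abs_divide field_simps)
    moreover have "\<bar>P' t\<bar> \<le> M" using M that \<open>T1 \<ge> T\<close> by simp
    ultimately show ?thesis using \<open>a \<noteq> 0\<close> by (simp add: field_simps)
  qed
  then have "bounded (P ` {T1..})" by (auto simp: bounded_iff)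
  moreover have "continuous_on {T1..} P"
    using deriv \<open>T1 \<ge> T\<close>
    by (intro continuous_at_imp_continuous_on) (meson DERIV_isCont atLeast_iff order_trans)
  ultimately have "a = 0"
    using deriv lim \<open>T1 \<ge> T\<close> bounded_image_atLeast_mono[OF inv_P_bounded]
    by (intro bounded_derivative_ratio_limit_eq_0[of T1 P P' P]) auto
  with \<open>a \<noteq> 0\<close> show False ..
qed

lemma Ck_on_differentiable_at:
  assumes "Ck_on k S f" and "1 \<le> k" and "t \<in> interior S"
  shows "f differentiable (at t)"
proof -
  obtain D where "D 0 = f" and "\<forall>j<k. \<forall>t\<in>S. (D j has_vector_derivative D (Suc j) t) (at t within S)"
    using assms(1) unfolding Ck_on_def by blast
  then have "(f has_vector_derivative D 1 t) (at t within S)"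
    using assms(2,3) interior_subset by fastforce
  then show ?thesis
    using at_within_interior[OF assms(3)] by (auto simp: differentiable_def has_vector_derivative_def)
qed

definition cross_f :: "(real \<Rightarrow> complex) \<Rightarrow> (real \<Rightarrow> complex) \<Rightarrow> (real \<Rightarrow> real) \<Rightarrow> real \<Rightarrow> real \<Rightarrow> complex" where
  "cross_f b c d t l = cnj (b t) * c t / complex_of_real (d t - l)"

lemma pi_f_differentiable_at:
  assumes "p differentiable (at t)" and "b differentiable (at t)" and "d differentiable (at t)"
    and "d t \<noteq> l"
  shows "(\<lambda>s. pi_f p b d s l) differentiable (at t)"
  unfolding pi_f_def power2_norm_eq_inner using assms by (intro derivative_intros) auto

lemma cross_f_differentiable_at:
  assumes "b differentiable (at t)" and "c differentiable (at t)" and "d differentiable (at t)"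
    and "d t \<noteq> l"
  shows "(\<lambda>s. cross_f b c d s l) differentiable (at t)"
proof -
  have "(\<lambda>s. d s - l) differentiable (at t)"
    using assms(3) by simp
  then have "(\<lambda>s. complex_of_real (d s - l)) differentiable (at t)"
    using differentiable_compose[OF of_real_differentiable] unfolding o_def by blast
  then show ?thesis
    unfolding cross_f_def using assms
    by (intro differentiable_divide differentiable_mult) (auto simp: differentiable_cnj_iff)
qed

lemma Im_rho_f: "Im (rho_f p b c d t l) = vector_derivative (\<lambda>s. pi_f p b d s l) (at t)"
  by (simp add: rho_f_def)

lemma Re_rho_f: "Re (rho_f p b c d t l) = 2 * Im (cross_f b c d t l)"
  by (simp add: rho_f_def cross_f_def)

lemma Im_kappa_f: "Im (kappa_f b c d q t l) = Im (vector_derivative (\<lambda>s. cross_f b c d s l) (at t))"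
  by (simp add: kappa_f_def cross_f_def)

lemma rho_over_pi_limit_real:
  assumes pi_differentiable: "\<forall>t\<ge>T. (\<lambda>s. pi_f p b d s l) differentiable (at t)"
    and rho_bounded: "bounded ((\<lambda>t. rho_f p b c d t l) ` {T..})"
    and inv_pi_bounded: "bounded ((\<lambda>t. 1 / pi_f p b d t l) ` {T..})"
    and lim: "((\<lambda>t. rho_f p b c d t l / complex_of_real (pi_f p b d t l)) \<longlongrightarrow> L) at_top"
  shows "((\<lambda>t. vector_derivative (\<lambda>s. pi_f p b d s l) (at t) / pi_f p b d t l) \<longlongrightarrow> 0) at_top"
    and "Im L = 0"
proof -
  have lim_Im: "((\<lambda>t. vector_derivative (\<lambda>s. pi_f p b d s l) (at t) / pi_f p b d t l) \<longlongrightarrow> Im L) at_top"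
    using tendsto_Im[OF lim] by (simp add: Im_rho_f)
  obtain M where "\<forall>t\<ge>T. cmod (rho_f p b c d t l) \<le> M"
    using rho_bounded by (auto simp: bounded_iff)
  then have "\<forall>t\<ge>T. \<bar>vector_derivative (\<lambda>s. pi_f p b d s l) (at t)\<bar> \<le> M"
    by (metis Im_rho_f abs_Im_le_cmod order_trans)
  then have "bounded ((\<lambda>t. vector_derivative (\<lambda>s. pi_f p b d s l) (at t)) ` {T..})"
    by (auto simp: bounded_iff)
  moreover have "\<forall>t\<ge>T. ((\<lambda>s. pi_f p b d s l) has_real_derivative
      vector_derivative (\<lambda>s. pi_f p b d s l) (at t)) (at t)"
    using pi_differentiable
    by (simp add: has_real_derivative_iff_has_vector_derivative vector_derivative_works)
  ultimately show "Im L = 0"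
    using inv_pi_bounded lim_Im by (intro bounded_log_derivative_limit_eq_0) auto
  with lim_Im show "((\<lambda>t. vector_derivative (\<lambda>s. pi_f p b d s l) (at t) / pi_f p b d t l) \<longlongrightarrow> 0) at_top"
    by simp
qed

lemma kappa_over_pi_limit_real:
  assumes pi_differentiable: "\<forall>t\<ge>T. (\<lambda>s. pi_f p b d s l) differentiable (at t)"
    and cross_differentiable: "\<forall>t\<ge>T. (\<lambda>s. cross_f b c d s l) differentiable (at t)"
    and rho_bounded: "bounded ((\<lambda>t. rho_f p b c d t l) ` {T..})"
    and inv_pi_bounded: "bounded ((\<lambda>t. 1 / pi_f p b d t l) ` {T..})"
    and lim: "((\<lambda>t. kappa_f b c d q t l / complex_of_real (pi_f p b d t l)) \<longlongrightarrow> L) at_top"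
  shows "Im L = 0"
proof (rule bounded_derivative_ratio_limit_eq_0)
  show "((\<lambda>t. Im (vector_derivative (\<lambda>s. cross_f b c d s l) (at t)) / pi_f p b d t l) \<longlongrightarrow> Im L) at_top"
    using tendsto_Im[OF lim] by (simp add: Im_kappa_f)
  show "\<forall>t\<ge>T. ((\<lambda>s. Im (cross_f b c d s l)) has_real_derivative
      Im (vector_derivative (\<lambda>s. cross_f b c d s l) (at t))) (at t)"
    using cross_differentiable by (auto intro: has_field_derivative_Im simp: vector_derivative_works)
  obtain M where "\<forall>t\<ge>T. cmod (rho_f p b c d t l) \<le> M"
    using rho_bounded by (auto simp: bounded_iff)
  then have "\<forall>t\<ge>T. \<bar>Im (cross_f b c d t l)\<bar> \<le> M"
    by (smt (verit) Re_rho_f abs_Re_le_cmod)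
  then show "bounded ((\<lambda>s. Im (cross_f b c d s l)) ` {T..})"
    by (auto simp: bounded_iff)
  show "continuous_on {T..} (\<lambda>s. pi_f p b d s l)"
    using pi_differentiable
    by (intro continuous_at_imp_continuous_on) (auto intro: differentiable_imp_continuous_within)
qed (fact inv_pi_bounded)

theorem lemma4p2:
  fixes p d q :: "real \<Rightarrow> real" and b c :: "real \<Rightarrow> complex" and dinf :: ereal
  assumes p_C2: "Ck_on 2 {0..} p" and d_C2: "Ck_on 2 {0..} d"
    and b_C2: "Ck_on 2 {0..} b" and c_C1: "Ck_on 1 {0..} c"
    and q_C0: "continuous_on {0..} q"
    and p_pos: "\<forall>t\<ge>0. p t > 0"
    and B1: "((\<lambda>t. ereal (d t)) \<longlongrightarrow> dinf) at_top"
    and B2: "\<exists>\<beta>>0. \<exists>\<gamma>>0. \<forall>t\<ge>0. cmod (b t) \<le> \<beta> * (\<bar>d t\<bar> + 1) \<and> cmod (c t) \<le> \<gamma> * (\<bar>d t\<bar> + 1)"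
    and B3a: "\<exists>l::real. ereal l \<noteq> dinf \<and> (\<exists>tl\<ge>0. l \<notin> d ` {tl..} \<and>
                 bounded ((\<lambda>t. pi_f p b d t l) ` {tl..}))"
    and B3b: "\<forall>l::real. l \<notin> closure (Delta_f p b d ` {0..}) \<and> ereal l \<noteq> dinf \<longrightarrow>
                 (\<exists>tl\<ge>0. l \<notin> d ` {tl..} \<and>
                   bounded ((\<lambda>t. rho_f p b c d t l) ` {tl..}) \<and>
                   bounded ((\<lambda>t. kappa_f b c d q t l) ` {tl..}) \<and>
                   bounded ((\<lambda>t. 1 / pi_f p b d t l) ` {tl..}))"
    and C: "\<forall>l::real. l \<notin> closure (Delta_f p b d ` {0..}) \<and> ereal l \<noteq> dinf \<longrightarrow>
                 (\<exists>L::complex. ((\<lambda>t. rho_f p b c d t l / complex_of_real (pi_f p b d t l)) \<longlongrightarrow> L) at_top) \<and>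
                 (\<exists>L::complex. ((\<lambda>t. kappa_f b c d q t l / complex_of_real (pi_f p b d t l)) \<longlongrightarrow> L) at_top)"
  shows "\<forall>l::real. l \<notin> closure (Delta_f p b d ` {0..}) \<and> ereal l \<noteq> dinf \<longrightarrow>
           ((\<lambda>t. vector_derivative (\<lambda>s. pi_f p b d s l) (at t) / pi_f p b d t l) \<longlongrightarrow> 0) at_top \<and>
           (\<exists>L::real. ((\<lambda>t. rho_f p b c d t l / complex_of_real (pi_f p b d t l)) \<longlongrightarrow> complex_of_real L) at_top) \<and>
           (\<exists>L::real. ((\<lambda>t. kappa_f b c d q t l / complex_of_real (pi_f p b d t l)) \<longlongrightarrow> complex_of_real L) at_top)"
proof (intro allI impI)
  fix l :: real
  assume l: "l \<notin> closure (Delta_f p b d ` {0..}) \<and> ereal l \<noteq> dinf"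
  obtain tl where "tl \<ge> 0" and "l \<notin> d ` {tl..}"
    and rho_bounded: "bounded ((\<lambda>t. rho_f p b c d t l) ` {tl..})"
    and inv_pi_bounded: "bounded ((\<lambda>t. 1 / pi_f p b d t l) ` {tl..})"
    using B3b l by blast
  obtain Lr Lk where
    Lr: "((\<lambda>t. rho_f p b c d t l / complex_of_real (pi_f p b d t l)) \<longlongrightarrow> Lr) at_top" and
    Lk: "((\<lambda>t. kappa_f b c d q t l / complex_of_real (pi_f p b d t l)) \<longlongrightarrow> Lk) at_top"
    using C l by blast
  \<comment> \<open>staying in the interior of \<open>{0..}\<close>, where the derivatives of \<open>Ck_on\<close> are two-sided\<close>
  define T where "T = tl + 1"
  have regular: "p differentiable (at t)" "b differentiable (at t)" "c differentiable (at t)"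
    "d differentiable (at t)" "d t \<noteq> l" if "t \<ge> T" for t
    using that \<open>tl \<ge> 0\<close> \<open>l \<notin> d ` {tl..}\<close> p_C2 b_C2 c_C1 d_C2
    by (auto simp: T_def intro!: Ck_on_differentiable_at)
  then have pi_differentiable: "\<forall>t\<ge>T. (\<lambda>s. pi_f p b d s l) differentiable (at t)"
    and cross_differentiable: "\<forall>t\<ge>T. (\<lambda>s. cross_f b c d s l) differentiable (at t)"
    by (auto intro!: pi_f_differentiable_at cross_f_differentiable_at regular)
  have "tl \<le> T" by (simp add: T_def)
  note rho_bounded' = bounded_image_atLeast_mono[OF rho_bounded this]
    and inv_pi_bounded' = bounded_image_atLeast_mono[OF inv_pi_bounded this]
  have "((\<lambda>t. vector_derivative (\<lambda>s. pi_f p b d s l) (at t) / pi_f p b d t l) \<longlongrightarrow> 0) at_top"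
    and "Im Lr = 0"
    using rho_over_pi_limit_real[OF pi_differentiable rho_bounded' inv_pi_bounded' Lr] by blast+
  moreover have "Im Lk = 0"
    using kappa_over_pi_limit_real[OF pi_differentiable cross_differentiable rho_bounded' inv_pi_bounded' Lk] .
  ultimately have "Lr = complex_of_real (Re Lr)" and "Lk = complex_of_real (Re Lk)"
    and "((\<lambda>t. vector_derivative (\<lambda>s. pi_f p b d s l) (at t) / pi_f p b d t l) \<longlongrightarrow> 0) at_top"
    by (simp_all add: complex_eq_iff)
  with Lr Lk show "((\<lambda>t. vector_derivative (\<lambda>s. pi_f p b d s l) (at t) / pi_f p b d t l) \<longlongrightarrow> 0) at_top \<and>
      (\<exists>L::real. ((\<lambda>t. rho_f p b c d t l / complex_of_real (pi_f p b d t l)) \<longlongrightarrow> complex_of_real L) at_top) \<and>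
      (\<exists>L::real. ((\<lambda>t. kappa_f b c d q t l / complex_of_real (pi_f p b d t l)) \<longlongrightarrow> complex_of_real L) at_top)"
    by metis
qed

end
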